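(* Let $K\ge L\ge T\ge 2$ be integers, let $\kappa,\lambda$ be the smallest non-negative integers such that $K+1+\kappa$ and $L+1+\lambda$ are coprime to $T-1$, and put $K^\star=K+1+\kappa$, $L^\star=L+1+\lambda$, $\bar T=T-1$, $q=K^\star L^\star+\bar T^2$. Let $x$ be a positive integer coprime to $q$ and $y\in\{0,\dots,q-1\}$ the unique integer with $x\bar T+yK^\star\equiv 0\pmod q$. Then the only integer solutions $(i,j)$ of $ix\equiv jy\pmod q$ with $-L\le i\le T+L-1$ and $-K-T+1\le j\le K-1$ are (possibly) $(0,0)$, $(L^\star,\bar T)$ and $(\bar T,-K^\star)$. *)

theory Defs
  imports "HOL-Number_Theory.Number_Theory"
begin

definition shift_min :: "nat \<Rightarrow> nat \<Rightarrow> nat" where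
  "shift_min K T = (LEAST k::nat. coprime (K + 1 + k) (T - 1))"

end

theory Submission
  imports Defs
begin

text \<open>
  With \<open>Ks\<close>, \<open>Ls\<close>, \<open>Tb\<close> as in the statement, the identity
  \<open>x (i Ks + j Tb) = Ks (i x - j y) + j (x Tb + y Ks)\<close> shows \<open>q | i Ks + j Tb\<close>, and since
  \<open>q = Ks Ls + Tb\<^sup>2\<close> with \<open>Ks\<close> coprime to \<open>Tb\<close>, every solution \<open>(i, j)\<close> lies in the lattice
  spanned by \<open>(Ls, Tb)\<close> and \<open>(Tb, -Ks)\<close>.  The box is too small to contain any lattice point
  other than \<open>0\<close> and the two generators, as a sign analysis of the second coordinate shows.
\<close>

lemma coprime_shift_min:
  assumes "T \<ge> 2"
  shows "coprime (K + 1 + shift_min K T) (T - 1)"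
  unfolding shift_min_def
proof (rule LeastI)
  have "K + 1 + ((K + 1) * (T - 2) + 1) = (K + 1) * (T - 1) + 1"
    using assms by (simp add: algebra_simps flip: Suc_diff_Suc)
  then show "coprime (K + 1 + ((K + 1) * (T - 2) + 1)) (T - 1)"
    by (metis coprime_mult_right_iff coprime_add_one_left)
qed

lemma cong_solutions_in_lattice:
  fixes Ks Ls Tb x y i j :: int
  defines "q \<equiv> Ks * Ls + Tb ^ 2"
  assumes "coprime Ks Tb" and "Tb \<noteq> 0" and "coprime x q"
    and "[x * Tb + y * Ks = 0] (mod q)" and "[i * x = j * y] (mod q)"
  obtains a b where "i = a * Ls + b * Tb" and "j = a * Tb - b * Ks"
proof -
  have "x * (i * Ks + j * Tb) = Ks * (i * x - j * y) + j * (x * Tb + y * Ks)"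
    by (simp add: algebra_simps)
  moreover have "q dvd x * Tb + y * Ks" and "q dvd i * x - j * y"
    using assms(5,6) by (simp_all add: cong_0_iff cong_iff_dvd_diff)
  ultimately have "q dvd x * (i * Ks + j * Tb)"
    by simp
  then have "q dvd i * Ks + j * Tb"
    using assms(4) coprime_commute coprime_dvd_mult_right_iff by blast
  then obtain a where a: "i * Ks + j * Tb = q * a" ..
  then have key: "Ks * (i - a * Ls) = Tb * (a * Tb - j)"
    unfolding q_def by (simp add: algebra_simps power2_eq_square)
  then have "Tb dvd i - a * Ls"
    using assms(2) by (metis coprime_commute coprime_dvd_mult_right_iff dvd_triv_left)
  then obtain b where b: "i - a * Ls = Tb * b" ..
  with key have "Tb * (Ks * b) = Tb * (a * Tb - j)"
    by (simp add: algebra_simps)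
  then have "Ks * b = a * Tb - j"
    using assms(3) by simp
  then have "j = a * Tb - b * Ks"
    by (simp add: algebra_simps)
  moreover have "i = a * Ls + b * Tb"
    using b by (simp add: algebra_simps)
  ultimately show thesis
    using that by blast
qed

lemma lattice_points_in_box:
  fixes Ks Ls Tb K L a b :: int
  assumes "K + 1 \<le> Ks" and "L + 1 \<le> Ls" and "1 \<le> Tb" and "Tb \<le> L" and "L \<le> K"
    and "- L \<le> a * Ls + b * Tb" and "a * Ls + b * Tb \<le> Tb + L"
    and "- K - Tb \<le> a * Tb - b * Ks" and "a * Tb - b * Ks \<le> K - 1"
  shows "(a, b) \<in> {(0, 0), (1, 0), (0, 1)}"
proof -
  have pos: "Ks > 0" "Ls > 0" "Tb > 0"
    using assms by linarith+
  consider "b \<ge> 1" | "b \<le> -1" | "b = 0"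
    by linarith
  then show ?thesis
  proof cases
    case 1
    then have "b * Tb \<ge> 1 * Tb" "b * Ks \<ge> 1 * Ks"
      by (simp_all only: mult_le_cancel_right_pos[OF pos(3)] mult_le_cancel_right_pos[OF pos(1)])
    then have "a * Ls < 1 * Ls" "(-1) * Tb < a * Tb"
      using assms by linarith+
    then have "a < 1" "-1 < a"
      by (simp_all only: mult_less_cancel_right_pos[OF pos(2)] mult_less_cancel_right_pos[OF pos(3)])
    then have "a = 0"
      by simp
    then have "b * Ks < 2 * Ks"
      using assms by (simp only: mult_zero_left)
    then have "b < 2"
      by (simp only: mult_less_cancel_right_pos[OF pos(1)])
    then show ?thesis
      using 1 \<open>a = 0\<close> by simp
  next
    case 2
    then have "b * Tb \<le> (-1) * Tb" "b * Ks \<le> (-1) * Ks"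
      by (simp_all only: mult_le_cancel_right_pos[OF pos(3)] mult_le_cancel_right_pos[OF pos(1)])
    then have "a * Tb < 0 * Tb"
      using assms by linarith
    then have "a \<le> -1"
      by (simp only: mult_less_cancel_right_pos[OF pos(3)])
    then have "a * Ls \<le> (-1) * Ls"
      by (simp only: mult_le_cancel_right_pos[OF pos(2)])
    then show ?thesis
      using assms \<open>b * Tb \<le> (-1) * Tb\<close> by linarith
  next
    case 3
    then have "(-1) * Ls < a * Ls" "a * Ls < 2 * Ls"
      using assms by (simp_all only: mult_zero_left add_0_right)
    then have "-1 < a" "a < 2"
      by (simp_all only: mult_less_cancel_right_pos[OF pos(2)])
    then show ?thesis
      using 3 by auto
  qed
qed

theorem lemma6:
  fixes K L T :: nat and x y i j :: int
  assumes "T \<ge> 2" and "L \<ge> T" and "K \<ge> L"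
  defines "Ks \<equiv> int (K + 1 + shift_min K T)"
      and "Ls \<equiv> int (L + 1 + shift_min L T)"
      and "Tb \<equiv> int T - 1"
  defines "q \<equiv> Ks * Ls + Tb ^ 2"
  assumes "x > 0" and "coprime x q"
      and "0 \<le> y" and "y < q" and "[x * Tb + y * Ks = 0] (mod q)"
      and "[i * x = j * y] (mod q)"
      and "- int L \<le> i" and "i \<le> int T + int L - 1"
      and "- int K - int T + 1 \<le> j" and "j \<le> int K - 1"
  shows "(i, j) \<in> {(0, 0), (Ls, Tb), (Tb, - Ks)}"
proof -
  have "Tb = int (T - 1)"
    using assms(1) unfolding Tb_def by simp
  then have "coprime Ks Tb"
    using coprime_shift_min[OF assms(1)] unfolding Ks_def by (simp only: coprime_int_iff)
  moreover have "Tb \<noteq> 0"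
    using assms(1) unfolding Tb_def by simp
  ultimately obtain a b where i: "i = a * Ls + b * Tb" and j: "j = a * Tb - b * Ks"
    using cong_solutions_in_lattice assms(9,12,13) unfolding q_def by metis
  have "(a, b) \<in> {(0, 0), (1, 0), (0, 1)}"
    by (rule lattice_points_in_box[of "int K" Ks "int L" Ls Tb])
      (use assms(1-3,14-) i j in \<open>simp_all add: Ks_def Ls_def Tb_def\<close>)
  then show ?thesis
    using i j by auto
qed

end
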